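(* Skeptic can weakly force the event \[ A_3:=\Bigl\{\xi:\ \limsup_{n\to\infty}s_n=\infty\ \text{and}\ \liminf_{n\to\infty}s_n=-\infty\Bigr\}. \]
   Context: Fair-coin game: in rounds $n=1,2,\dots$ Skeptic announces $M_n\in\mathbb{R}$ (depending only on $x_1,\dots,x_{n-1}$), then Reality announces $x_n\in\{-1,1\}$. A path is an infinite sequence $\xi=x_1x_2\cdots\in\{-1,1\}^{\mathbb{N}}$, and $\Omega$ is the set of paths. We write $s_n:=x_1+\cdots+x_n$, with $s_0=0$. The capital process of a strategy with zero initial capital is $\mathcal{K}^{\mathcal{P}}_n=\sum_{k=1}^nM_kx_k$. Skeptic weakly forces $E\subseteq\Omega$ if some strategy $\mathcal{P}$ has $\mathcal{K}^{\mathcal{P}}_n(\xi)\ge-1$ for all $\xi\in\Omega$ and $n\ge0$, and $\limsup_n\mathcal{K}^{\mathcal{P}}_n(\xi)=\infty$ for every $\xi\notin E$. *)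

theory Defs
  imports Complex_Main "HOL-Library.Extended_Real" "HOL-Library.Liminf_Limsup"
begin

text \<open>Paths are 0-indexed: the move x_(k+1) of Reality is xi k.\<close>
definition Omega :: "(nat \<Rightarrow> int) set" where
  "Omega = {xi. \<forall>n. xi n \<in> {-1, 1}}"

definition prefix :: "(nat \<Rightarrow> int) \<Rightarrow> nat \<Rightarrow> int list" where
  "prefix xi n = map xi [0..<n]"

definition S :: "(nat \<Rightarrow> int) \<Rightarrow> nat \<Rightarrow> int" where
  "S xi n = (\<Sum>k<n. xi k)"

text \<open>A strategy maps the history x_1..x_(n-1) to the move M_n.
  Capital with zero initial capital: sum over k=1..n of M_k x_k.\<close>
definition capital :: "(int list \<Rightarrow> real) \<Rightarrow> (nat \<Rightarrow> int) \<Rightarrow> nat \<Rightarrow> real" where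
  "capital P xi n = (\<Sum>k<n. P (prefix xi k) * real_of_int (xi k))"

definition weakly_forces :: "(nat \<Rightarrow> int) set \<Rightarrow> bool" where
  "weakly_forces E \<longleftrightarrow>
     (\<exists>P. (\<forall>xi\<in>Omega. \<forall>n. capital P xi n \<ge> -1) \<and>
          (\<forall>xi\<in>Omega - E. limsup (\<lambda>n. ereal (capital P xi n)) = \<infinity>))"

definition A3 :: "(nat \<Rightarrow> int) set" where
  "A3 = {xi\<in>Omega. limsup (\<lambda>n. ereal (real_of_int (S xi n))) = \<infinity> \<and>
                    liminf (\<lambda>n. ereal (real_of_int (S xi n))) = -\<infinity>}"

end

theory Submission
  imports Defs
begin

text \<open>Off A3 the walk s_n is bounded above or below, and each of three cases is handled by betting
  the increments of a nonnegative supermartingale with initial value 1, which keeps the capital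
  above -1. If s_n is bounded below by L but not above, the martingale
  2^m (1 + (s_n - m)/2), with m the running minimum, is at least 2^L s_n/2 and so unbounded;
  its mirror image handles the case bounded above but not below. If s_n stays in a bounded range,
  the supermartingale x + x^2 (n + (s_n - m)(M - s_n))/4, with M the running maximum and
  x = 2^-(M - m), grows linearly in n. Weak forcing is stable under intersection (average the
  strategies), which combines the three cases.\<close>

section \<open>Limit superior of real sequences\<close>

lemma limsup_ereal_eq_PInfty_iff:
  fixes f :: "nat \<Rightarrow> real"
  shows "limsup (\<lambda>n. ereal (f n)) = \<infinity> \<longleftrightarrow> (\<forall>B. \<exists>\<^sub>F n in sequentially. B < f n)"
proof
  assume lim: "limsup (\<lambda>n. ereal (f n)) = \<infinity>"
  show "\<forall>B. \<exists>\<^sub>F n in sequentially. B < f n"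
  proof (rule allI, rule ccontr)
    fix B :: real
    assume "\<not> (\<exists>\<^sub>F n in sequentially. B < f n)"
    then have "\<forall>\<^sub>F n in sequentially. ereal (f n) \<le> ereal B"
      by (simp add: not_frequently not_less)
    then have "limsup (\<lambda>n. ereal (f n)) \<le> ereal B"
      by (rule Limsup_bounded)
    with lim show False by simp
  qed
next
  assume freq: "\<forall>B. \<exists>\<^sub>F n in sequentially. B < f n"
  show "limsup (\<lambda>n. ereal (f n)) = \<infinity>"
  proof (rule ccontr)
    assume "limsup (\<lambda>n. ereal (f n)) \<noteq> \<infinity>"
    then obtain B where "limsup (\<lambda>n. ereal (f n)) < ereal B"
      using less_PInf_Ex_of_nat by auto
    then have "\<forall>\<^sub>F n in sequentially. f n < B"
      using Limsup_lessD by fastforce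
    with freq[rule_format, of B] show False
      by (simp add: frequently_def) (metis (mono_tags) eventually_mono less_asym)
  qed
qed

lemma frequently_greater_if_not_bdd_above:
  fixes f :: "nat \<Rightarrow> 'a::linorder"
  assumes "\<not> bdd_above (range f)"
  shows "\<exists>\<^sub>F n in sequentially. c < f n"
  unfolding frequently_sequentially
proof
  fix N
  define b where "b = Max (f ` {..N})"
  have "\<forall>n<N. f n \<le> b"
    by (simp add: b_def)
  moreover obtain n where "max b c < f n"
    using assms by (metis bdd_aboveI2 not_le)
  ultimately show "\<exists>n\<ge>N. c < f n"
    by (metis max.strict_boundedE not_le)
qed

lemma limsup_of_int_PInfty_if_not_bdd_above:
  fixes f :: "nat \<Rightarrow> int"
  assumes "\<not> bdd_above (range f)"
  shows "limsup (\<lambda>n. ereal (real_of_int (f n))) = \<infinity>"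
  unfolding limsup_ereal_eq_PInfty_iff
proof
  fix B :: real
  have "\<exists>\<^sub>F n in sequentially. \<lceil>B\<rceil> < f n"
    using assms by (rule frequently_greater_if_not_bdd_above)
  then show "\<exists>\<^sub>F n in sequentially. B < real_of_int (f n)"
    by (rule frequently_elim1) (meson le_of_int_ceiling of_int_less_iff order.strict_trans1)
qed

lemma limsup_ereal_half_sum_PInfty:
  fixes f g :: "nat \<Rightarrow> real"
  assumes "limsup (\<lambda>n. ereal (f n)) = \<infinity>" "\<And>n. c \<le> g n"
  shows "limsup (\<lambda>n. ereal ((f n + g n) / 2)) = \<infinity>"
  unfolding limsup_ereal_eq_PInfty_iff
proof
  fix B :: real
  have "\<exists>\<^sub>F n in sequentially. 2 * B - c < f n"
    using assms(1) by (simp add: limsup_ereal_eq_PInfty_iff)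
  then show "\<exists>\<^sub>F n in sequentially. B < (f n + g n) / 2"
  proof (rule frequently_elim1)
    fix n
    show "2 * B - c < f n \<Longrightarrow> B < (f n + g n) / 2"
      using assms(2)[of n] by (simp add: field_simps)
  qed
qed

section \<open>Weak forcing\<close>

lemma weakly_forces_mono:
  assumes "weakly_forces E" "Omega \<inter> E \<subseteq> E'"
  shows "weakly_forces E'"
  using assms unfolding weakly_forces_def by blast

lemma capital_average:
  "capital (\<lambda>h. (P h + Q h) / 2) xi n = (capital P xi n + capital Q xi n) / 2"
  by (simp add: capital_def sum_divide_distrib[symmetric] sum.distrib[symmetric] algebra_simps)

lemma weakly_forces_Int:
  assumes "weakly_forces E" "weakly_forces E'"
  shows "weakly_forces (E \<inter> E')"
proof -
  obtain P where P_ge: "\<forall>xi\<in>Omega. \<forall>n. capital P xi n \<ge> -1"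
    and P_lim: "\<forall>xi\<in>Omega - E. limsup (\<lambda>n. ereal (capital P xi n)) = \<infinity>"
    using assms(1) by (auto simp: weakly_forces_def)
  obtain Q where Q_ge: "\<forall>xi\<in>Omega. \<forall>n. capital Q xi n \<ge> -1"
    and Q_lim: "\<forall>xi\<in>Omega - E'. limsup (\<lambda>n. ereal (capital Q xi n)) = \<infinity>"
    using assms(2) by (auto simp: weakly_forces_def)
  have "limsup (\<lambda>n. ereal (capital (\<lambda>h. (P h + Q h) / 2) xi n)) = \<infinity>"
    if "xi \<in> Omega - (E \<inter> E')" for xi
  proof (cases "xi \<in> E")
    case True
    then have "limsup (\<lambda>n. ereal ((capital Q xi n + capital P xi n) / 2)) = \<infinity>"
      using that P_ge Q_lim by (intro limsup_ereal_half_sum_PInfty) auto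
    then show ?thesis
      by (simp add: capital_average add.commute)
  next
    case False
    then show ?thesis
      unfolding capital_average using that P_lim Q_ge
      by (intro limsup_ereal_half_sum_PInfty) auto
  qed
  moreover have "capital (\<lambda>h. (P h + Q h) / 2) xi n \<ge> -1" if "xi \<in> Omega" for xi n
    using that P_ge Q_ge add_mono[of "-1" "capital P xi n" "-1" "capital Q xi n"]
    by (simp add: capital_average field_simps)
  ultimately show ?thesis
    unfolding weakly_forces_def by blast
qed

lemma Omega_reflect: "xi \<in> Omega \<Longrightarrow> (\<lambda>k. - xi k) \<in> Omega"
  by (auto simp: Omega_def)

lemma S_reflect: "S (\<lambda>k. - xi k) n = - S xi n"
  by (simp add: S_def sum_negf)

lemma capital_reflect:
  "capital (\<lambda>h. - P (map uminus h)) xi n = capital P (\<lambda>k. - xi k) n"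
  by (simp add: capital_def prefix_def comp_def)

lemma weakly_forces_reflect:
  assumes "weakly_forces E"
  shows "weakly_forces {xi. (\<lambda>k. - xi k) \<in> E}"
proof -
  obtain P where "\<forall>xi\<in>Omega. \<forall>n. capital P xi n \<ge> -1"
    and "\<forall>xi\<in>Omega - E. limsup (\<lambda>n. ereal (capital P xi n)) = \<infinity>"
    using assms by (auto simp: weakly_forces_def)
  then have "(\<forall>xi\<in>Omega. \<forall>n. capital (\<lambda>h. - P (map uminus h)) xi n \<ge> -1) \<and>
    (\<forall>xi\<in>Omega - {xi. (\<lambda>k. - xi k) \<in> E}.
      limsup (\<lambda>n. ereal (capital (\<lambda>h. - P (map uminus h)) xi n)) = \<infinity>)"
    unfolding capital_reflect using Omega_reflect by auto
  then show ?thesis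
    unfolding weakly_forces_def by blast
qed

definition supermartingale :: "(int list \<Rightarrow> real) \<Rightarrow> bool" where
  "supermartingale T \<longleftrightarrow> (\<forall>h. T (h @ [1]) + T (h @ [-1]) \<le> 2 * T h)"

definition hedge :: "(int list \<Rightarrow> real) \<Rightarrow> int list \<Rightarrow> real" where
  "hedge T h = (T (h @ [1]) - T (h @ [-1])) / 2"

lemma capital_hedge_ge:
  assumes "supermartingale T" "xi \<in> Omega"
  shows "T (prefix xi n) - T [] \<le> capital (hedge T) xi n"
proof (induction n)
  case 0
  then show ?case by (simp add: capital_def prefix_def)
next
  case (Suc n)
  let ?h = "prefix xi n"
  have "xi n = 1 \<or> xi n = -1"
    using assms(2) by (auto simp: Omega_def)
  moreover have "T (?h @ [1]) + T (?h @ [-1]) \<le> 2 * T ?h"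
    using assms(1) by (simp add: supermartingale_def)
  ultimately have "T (?h @ [xi n]) \<le> T ?h + hedge T ?h * real_of_int (xi n)"
    by (auto simp: hedge_def field_simps)
  then show ?case
    using Suc by (simp add: capital_def prefix_def)
qed

lemma weakly_forces_if_supermartingale:
  assumes "supermartingale T" "\<And>h. 0 \<le> T h" "T [] \<le> 1"
    and "\<And>xi. xi \<in> Omega - E \<Longrightarrow> \<not> bdd_above (range (\<lambda>n. T (prefix xi n)))"
  shows "weakly_forces E"
  unfolding weakly_forces_def
proof (intro exI[of _ "hedge T"] conjI ballI allI)
  fix xi n
  assume "xi \<in> Omega"
  then show "-1 \<le> capital (hedge T) xi n"
    using capital_hedge_ge[OF assms(1), of xi n] assms(2)[of "prefix xi n"] assms(3) by linarith
next
  fix xi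
  assume xi: "xi \<in> Omega - E"
  show "limsup (\<lambda>n. ereal (capital (hedge T) xi n)) = \<infinity>"
    unfolding limsup_ereal_eq_PInfty_iff
  proof
    fix B :: real
    have "\<exists>\<^sub>F n in sequentially. B + 1 < T (prefix xi n)"
      using assms(4)[OF xi] by (rule frequently_greater_if_not_bdd_above)
    then show "\<exists>\<^sub>F n in sequentially. B < capital (hedge T) xi n"
    proof (rule frequently_elim1)
      fix n
      have "T (prefix xi n) - 1 \<le> capital (hedge T) xi n"
        using capital_hedge_ge[OF assms(1), of xi n] xi assms(3) by simp
      then show "B + 1 < T (prefix xi n) \<Longrightarrow> B < capital (hedge T) xi n"
        by linarith
    qed
  qed
qed

section \<open>The running extremes of the walk\<close>

fun walk_step :: "int \<times> int \<times> int \<Rightarrow> int \<Rightarrow> int \<times> int \<times> int" where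
  "walk_step (s, lo, hi) x = (s + x, min lo (s + x), max hi (s + x))"

definition walk :: "int list \<Rightarrow> int \<times> int \<times> int" where
  "walk h = foldl walk_step (0, 0, 0) h"

lemma walk_Nil [simp]: "walk [] = (0, 0, 0)"
  by (simp add: walk_def)

lemma walk_snoc [simp]: "walk (h @ [x]) = walk_step (walk h) x"
  by (simp add: walk_def)

lemma walk_bounds: "walk h = (s, lo, hi) \<Longrightarrow> lo \<le> s \<and> s \<le> hi \<and> lo \<le> 0 \<and> 0 \<le> hi"
proof (induction h arbitrary: s lo hi rule: rev_induct)
  case Nil
  then show ?case by simp
next
  case (snoc x h)
  then show ?case
    by (cases "walk h") force
qed

lemma walk_prefix: "walk (prefix xi n) = (S xi n, Min (S xi ` {..n}), Max (S xi ` {..n}))"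
proof (induction n)
  case 0
  then show ?case by (simp add: prefix_def S_def)
next
  case (Suc n)
  have "prefix xi (Suc n) = prefix xi n @ [xi n]" "S xi (Suc n) = S xi n + xi n"
    by (simp_all add: prefix_def S_def)
  with Suc show ?case
    by (simp add: atMost_Suc min.commute max.commute)
qed

lemma walk_prefix_bounded:
  assumes "walk (prefix xi n) = (s, lo, hi)"
  shows "s = S xi n" "(\<And>k. L \<le> S xi k) \<Longrightarrow> L \<le> lo" "(\<And>k. S xi k \<le> H) \<Longrightarrow> hi \<le> H"
  using assms by (auto simp: walk_prefix)

section \<open>Two supermartingales\<close>

definition up_martingale :: "int list \<Rightarrow> real" where
  "up_martingale h =
    (case walk h of (s, lo, _) \<Rightarrow> (1/2) ^ nat (- lo) * (1 + real_of_int (s - lo) / 2))"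

lemma up_martingale_nonneg: "0 \<le> up_martingale h"
  using walk_bounds[of h] by (cases "walk h") (simp add: up_martingale_def)

lemma supermartingale_up_martingale: "supermartingale up_martingale"
  unfolding supermartingale_def
proof
  fix h
  obtain s lo hi where walk_h: "walk h = (s, lo, hi)"
    by (cases "walk h") auto
  have "lo \<le> s" "lo \<le> 0"
    using walk_bounds[OF walk_h] by auto
  show "up_martingale (h @ [1]) + up_martingale (h @ [-1]) \<le> 2 * up_martingale h"
  proof (cases "s = lo")
    case True
    have "nat (- (lo - 1)) = Suc (nat (- lo))" "nat (1 - lo) = Suc (nat (- lo))"
      using \<open>lo \<le> 0\<close> by auto
    with True show ?thesis
      by (simp add: up_martingale_def walk_h)
  next
    case False
    with \<open>lo \<le> s\<close> have "min lo (s + 1) = lo" "min lo (s - 1) = lo"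
      by auto
    then show ?thesis
      by (simp add: up_martingale_def walk_h field_simps)
  qed
qed

lemma up_martingale_prefix_ge:
  assumes "\<And>k. L \<le> S xi k"
  shows "(1/2) ^ nat (- L) * real_of_int (S xi n) / 2 \<le> up_martingale (prefix xi n)"
proof -
  obtain s lo hi where walk_xi: "walk (prefix xi n) = (s, lo, hi)"
    by (cases "walk (prefix xi n)") auto
  have "s = S xi n" "L \<le> lo"
    using walk_prefix_bounded[OF walk_xi] assms by auto
  have "lo \<le> s" "lo \<le> 0"
    using walk_bounds[OF walk_xi] by auto
  have scale: "(1/2::real) ^ nat (- L) \<le> (1/2) ^ nat (- lo)"
    using \<open>L \<le> lo\<close> by (intro power_decreasing) auto
  have "(1/2::real) ^ nat (- L) * (real_of_int s / 2)
      \<le> (1/2) ^ nat (- lo) * (1 + real_of_int (s - lo) / 2)"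
  proof (cases "0 \<le> s")
    case True
    moreover have "real_of_int s / 2 \<le> 1 + real_of_int (s - lo) / 2"
      using \<open>lo \<le> 0\<close> by (simp add: field_simps)
    ultimately show ?thesis
      using scale by (intro mult_mono) auto
  next
    case False
    then have "(1/2::real) ^ nat (- L) * (real_of_int s / 2) \<le> 0"
      by (simp add: mult_nonneg_nonpos)
    also have "0 \<le> (1/2::real) ^ nat (- lo) * (1 + real_of_int (s - lo) / 2)"
      using \<open>lo \<le> s\<close> by simp
    finally show ?thesis .
  qed
  then show ?thesis
    by (simp add: up_martingale_def walk_xi \<open>s = S xi n\<close>)
qed

lemma weakly_forces_bdd_below_imp_bdd_above:
  "weakly_forces {xi. bdd_below (range (S xi)) \<longrightarrow> bdd_above (range (S xi))}"
proof (rule weakly_forces_if_supermartingale[OF supermartingale_up_martingale up_martingale_nonneg])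
  show "up_martingale [] \<le> 1"
    by (simp add: up_martingale_def)
next
  fix xi
  assume "xi \<in> Omega - {xi. bdd_below (range (S xi)) \<longrightarrow> bdd_above (range (S xi))}"
  then obtain L where L: "\<And>k. L \<le> S xi k" and unbounded: "\<not> bdd_above (range (S xi))"
    by (fastforce simp: bdd_below_def)
  define c :: real where "c = (1/2) ^ nat (- L) / 2"
  have "c > 0"
    by (simp add: c_def)
  show "\<not> bdd_above (range (\<lambda>n. up_martingale (prefix xi n)))"
  proof
    assume "bdd_above (range (\<lambda>n. up_martingale (prefix xi n)))"
    then obtain M where M: "\<And>n. up_martingale (prefix xi n) \<le> M"
      by (auto simp: bdd_above_def)
    have bound: "c * real_of_int (S xi n) \<le> M" for n
      using up_martingale_prefix_ge[OF L, of n] M[of n] by (simp add: c_def)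
    have "S xi n \<le> \<lceil>M / c\<rceil>" for n
      using bound[of n] \<open>c > 0\<close> by (simp add: le_ceiling_iff field_simps)
    then have "bdd_above (range (S xi))"
      by (rule bdd_aboveI2)
    with unbounded show False ..
  qed
qed

text \<open>With a = s - lo and b = hi - s, the quantity n + a b is a martingale while the walk stays
  strictly between its running extremes; a step leaving the range widens it by one and halves
  the factor (1/2)^(a + b), which pays for the jump.\<close>

definition confined_value :: "nat \<Rightarrow> nat \<Rightarrow> nat \<Rightarrow> real" where
  "confined_value n a b = (1/2) ^ (a + b) + ((1/2) ^ (a + b))\<^sup>2 / 4 * real (n + a * b)"

lemma confined_value_commute: "confined_value n a b = confined_value n b a"
  by (simp add: confined_value_def add.commute mult.commute)

lemma linear_le_power_of_two: "4 * real k + 1 \<le> 8 * 2 ^ k"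
proof -
  have "real k < 2 ^ k"
    using less_exp[of k] by (metis of_nat_less_iff of_nat_numeral of_nat_power)
  moreover have "(1::real) \<le> 2 ^ k"
    by simp
  ultimately show ?thesis
    by linarith
qed

lemma confined_value_step_boundary:
  "confined_value (Suc n) 1 (b - 1) + confined_value (Suc n) 0 (Suc b) \<le> 2 * confined_value n 0 b"
proof (cases b)
  case 0
  then show ?thesis
    by (simp add: confined_value_def field_simps)
next
  case (Suc k)
  define x :: real where "x = (1/2) ^ b"
  have "0 \<le> x"
    by (simp add: x_def)
  have "x * (4 * real b + 1) \<le> 8"
    using linear_le_power_of_two[of b] by (simp add: x_def power_one_over field_simps)
  from mult_left_mono[OF this \<open>0 \<le> x\<close>]
  have "x * x * (4 * real b + 1) \<le> 8 * x"
    by (simp add: algebra_simps)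
  moreover have "0 \<le> x * x * real n"
    using \<open>0 \<le> x\<close> by simp
  moreover have "confined_value (Suc n) 1 (b - 1) = x + x\<^sup>2 / 4 * (real n + real b)"
    using Suc by (simp add: confined_value_def x_def)
  moreover have "confined_value (Suc n) 0 (Suc b) = x / 2 + x\<^sup>2 / 16 * (real n + 1)"
    by (simp add: confined_value_def x_def power2_eq_square)
  moreover have "confined_value n 0 b = x + x\<^sup>2 / 4 * real n"
    by (simp add: confined_value_def x_def)
  ultimately show ?thesis
    by (simp add: power2_eq_square field_simps)
qed

text \<open>Truncated subtraction is what the walk does: a step up from the running maximum (b = 0)
  keeps b = 0, a step down from the running minimum keeps a = 0.\<close>

lemma confined_value_step:
  "confined_value (Suc n) (Suc a) (b - 1) + confined_value (Suc n) (a - 1) (Suc b)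
    \<le> 2 * confined_value n a b"
proof (cases "a = 0 \<or> b = 0")
  case True
  then show ?thesis
    using confined_value_step_boundary[of n b] confined_value_step_boundary[of n a]
    by (auto simp: confined_value_commute)
next
  case False
  then obtain a' b' where "a = Suc a'" "b = Suc b'"
    by (metis not0_implies_Suc)
  then show ?thesis
    by (simp add: confined_value_def field_simps)
qed

lemma confined_value_ge:
  assumes "a + b \<le> r"
  shows "((1/2) ^ r)\<^sup>2 / 4 * real n \<le> confined_value n a b"
proof -
  have "((1/2::real) ^ r)\<^sup>2 \<le> ((1/2) ^ (a + b))\<^sup>2"
    using assms by (intro power_mono power_decreasing) auto
  then have "((1/2::real) ^ r)\<^sup>2 / 4 * real n \<le> ((1/2) ^ (a + b))\<^sup>2 / 4 * real (n + a * b)"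
    by (intro mult_mono divide_right_mono) auto
  then show ?thesis
    by (simp add: confined_value_def add_increasing)
qed

definition confined_supermartingale :: "int list \<Rightarrow> real" where
  "confined_supermartingale h =
    (case walk h of (s, lo, hi) \<Rightarrow> confined_value (length h) (nat (s - lo)) (nat (hi - s)))"

lemma confined_supermartingale_nonneg: "0 \<le> confined_supermartingale h"
  by (cases "walk h") (simp add: confined_supermartingale_def confined_value_def)

lemma supermartingale_confined_supermartingale: "supermartingale confined_supermartingale"
  unfolding supermartingale_def
proof
  fix h
  obtain s lo hi where walk_h: "walk h = (s, lo, hi)"
    by (cases "walk h") auto
  have "lo \<le> s" "s \<le> hi"
    using walk_bounds[OF walk_h] by auto
  then have "walk (h @ [1]) = (s + 1, lo, max hi (s + 1))"
    "walk (h @ [-1]) = (s - 1, min lo (s - 1), hi)"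
    "nat (s + 1 - lo) = Suc (nat (s - lo))" "nat (max hi (s + 1) - (s + 1)) = nat (hi - s) - 1"
    "nat (s - 1 - min lo (s - 1)) = nat (s - lo) - 1" "nat (hi - (s - 1)) = Suc (nat (hi - s))"
    using walk_h by auto
  then show "confined_supermartingale (h @ [1]) + confined_supermartingale (h @ [-1])
      \<le> 2 * confined_supermartingale h"
    using confined_value_step[of "length h" "nat (s - lo)" "nat (hi - s)"]
    by (simp add: confined_supermartingale_def walk_h)
qed

lemma confined_supermartingale_prefix_ge:
  assumes "\<And>k. L \<le> S xi k" "\<And>k. S xi k \<le> H"
  shows "((1/2) ^ nat (H - L))\<^sup>2 / 4 * real n \<le> confined_supermartingale (prefix xi n)"
proof -
  obtain s lo hi where walk_xi: "walk (prefix xi n) = (s, lo, hi)"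
    by (cases "walk (prefix xi n)") auto
  have "L \<le> lo" "hi \<le> H"
    using walk_prefix_bounded[OF walk_xi] assms by auto
  moreover have "lo \<le> s" "s \<le> hi"
    using walk_bounds[OF walk_xi] by auto
  ultimately have "nat (s - lo) + nat (hi - s) \<le> nat (H - L)"
    by linarith
  moreover have "length (prefix xi n) = n"
    by (simp add: prefix_def)
  ultimately show ?thesis
    using confined_value_ge by (simp add: confined_supermartingale_def walk_xi)
qed

lemma weakly_forces_unbounded:
  "weakly_forces {xi. \<not> (bdd_above (range (S xi)) \<and> bdd_below (range (S xi)))}"
proof (rule weakly_forces_if_supermartingale[OF supermartingale_confined_supermartingale
      confined_supermartingale_nonneg])
  show "confined_supermartingale [] \<le> 1"
    by (simp add: confined_supermartingale_def confined_value_def)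
next
  fix xi
  assume "xi \<in> Omega - {xi. \<not> (bdd_above (range (S xi)) \<and> bdd_below (range (S xi)))}"
  then obtain L H where L: "\<And>k. L \<le> S xi k" and H: "\<And>k. S xi k \<le> H"
    by (fastforce simp: bdd_below_def bdd_above_def)
  define c :: real where "c = ((1/2) ^ nat (H - L))\<^sup>2 / 4"
  have "c > 0"
    by (simp add: c_def)
  show "\<not> bdd_above (range (\<lambda>n. confined_supermartingale (prefix xi n)))"
  proof
    assume "bdd_above (range (\<lambda>n. confined_supermartingale (prefix xi n)))"
    then obtain M where M: "\<And>n. confined_supermartingale (prefix xi n) \<le> M"
      by (auto simp: bdd_above_def)
    have bound: "c * real n \<le> M" for n
      using confined_supermartingale_prefix_ge[OF L H, of n] M[of n] by (simp add: c_def)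
    have "M \<le> c * real (nat \<lceil>M / c\<rceil>)"
      using \<open>c > 0\<close> real_nat_ceiling_ge[of "M / c"] by (simp add: field_simps)
    with bound[of "nat \<lceil>M / c\<rceil> + 1"] \<open>c > 0\<close> show False
      by (simp add: distrib_left)
  qed
qed

lemma A3_if_not_bdd_above_below:
  assumes "xi \<in> Omega" "\<not> bdd_above (range (S xi))" "\<not> bdd_below (range (S xi))"
  shows "xi \<in> A3"
proof -
  have "\<not> bdd_above (range (\<lambda>n. - S xi n))"
    using assms(3) by (simp add: bdd_above_uminus_image)
  then have "limsup (\<lambda>n. - ereal (real_of_int (S xi n))) = \<infinity>"
    using limsup_of_int_PInfty_if_not_bdd_above by fastforce
  then have "liminf (\<lambda>n. ereal (real_of_int (S xi n))) = -\<infinity>"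
    using ereal_Liminf_uminus[of sequentially "\<lambda>n. - ereal (real_of_int (S xi n))"] by simp
  then show ?thesis
    using assms(1,2) limsup_of_int_PInfty_if_not_bdd_above by (simp add: A3_def)
qed

theorem theorem3:
  shows "weakly_forces A3"
proof -
  have "weakly_forces {xi. (\<lambda>k. - xi k) \<in>
      {xi. bdd_below (range (S xi)) \<longrightarrow> bdd_above (range (S xi))}}"
    by (rule weakly_forces_reflect[OF weakly_forces_bdd_below_imp_bdd_above])
  then have "weakly_forces {xi. bdd_above (range (S xi)) \<longrightarrow> bdd_below (range (S xi))}"
    by (rule weakly_forces_mono)
      (auto simp: S_reflect bdd_above_uminus_image bdd_below_uminus_image)
  then have "weakly_forces ({xi. bdd_below (range (S xi)) \<longrightarrow> bdd_above (range (S xi))}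
      \<inter> {xi. bdd_above (range (S xi)) \<longrightarrow> bdd_below (range (S xi))}
      \<inter> {xi. \<not> (bdd_above (range (S xi)) \<and> bdd_below (range (S xi)))})"
    by (intro weakly_forces_Int weakly_forces_bdd_below_imp_bdd_above weakly_forces_unbounded)
  then show ?thesis
    by (rule weakly_forces_mono) (auto intro: A3_if_not_bdd_above_below)
qed

end
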